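(* Let $G$ be a finite simple graph, let $V_1\subset V(G)$ and $V_2 = V(G)\setminus V_1$ with both $V_1,V_2$ nonempty, and let $G_1=G(V_1)$. Write $V=V(G)$. Assume that $\max_{x,y\in V}\delta(x,y)\le 2$ (the contracted diameter of $V$ is at most $2$). Let $[S,\bar S]$ be an edge cut of $G$ with $V_2\subset S$, and let $k = \min_{x\in V_1}\deg_G(x)$. Assume $k > |[S,\bar S]|$. Then: 1. there exists $\bar s\in\bar S$ with $\delta(\bar s,S)=2$; 2. for every $s\in S$, $\delta(s,\bar S)=1$; 3. $|S\cap V_1| < |[S,\bar S]| < k < |\bar S|$; 4. $S\cap V_1\subset \partial^2 V_1$ and $\bar S\supset i^2 V_1$; 5. $\Phi\le |[S,\bar S]|$.
   Context: For $A,B\subset V(G)$, $[A,B]$ denotes the set of edges $ab$ of $G$ with $a\in A$, $b\in B$ (edges are unoriented, so $[A,B]=[B,A]$); $[v,A]$ means $[\{v\},A]$. $\deg_G(v)=|[v,V(G)]|$. For $A\subset V(G)$, $G(A)$ is the induced subgraph on $A$. $d_G(v,w)$ is the graph distance in $G$ and $d_G(v,A)=\min_{w\in A}d_G(v,w)$. An edge cut is a set $[S,\bar S]$ where $\emptyset\ne S\subsetneq V(G)$ and $\bar S=V(G)\setminus S$. Contracted distance: for $x,y\in V_1$, $\delta(x,y)=\min\{d_{G_1}(x,y),\, d_G(x,V_2)+d_G(y,V_2)\}$; for $x\in V$ and $y\in V_2$, $\delta(x,y)=\delta(y,x)=d_G(x,V_2)$. For $x\in V$ and $A\subset V$, $\delta(x,A)=\min_{a\in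 A}\delta(x,a)$. For $j\ge 1$: $\partial^j V_1=\{x\in V_1: |[x,V_2]|\ge j\}$ and $i^j V_1=\{x\in V_1: |[x,V_2]|<j\}$. $\Phi=\sum_{x\in V_1}\min\{\max\{1,|[x,i^2V_1]|\},\,|[x,V_2]|\}$. *)

theory Defs
  imports Main "HOL-Library.Extended_Nat"
begin

definition simple_graph :: "'a set \<Rightarrow> ('a \<Rightarrow> 'a \<Rightarrow> bool) \<Rightarrow> bool" where
  "simple_graph V E \<longleftrightarrow> finite V \<and> (\<forall>x y. E x y \<longrightarrow> E y x) \<and> (\<forall>x. \<not> E x x)
     \<and> (\<forall>x y. E x y \<longrightarrow> x \<in> V \<and> y \<in> V)"

definition edges_between :: "('a \<Rightarrow> 'a \<Rightarrow> bool) \<Rightarrow> 'a set \<Rightarrow> 'a set \<Rightarrow> 'a set set" where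
  "edges_between E A B = {{a, b} | a b. a \<in> A \<and> b \<in> B \<and> E a b}"

definition degree :: "'a set \<Rightarrow> ('a \<Rightarrow> 'a \<Rightarrow> bool) \<Rightarrow> 'a \<Rightarrow> nat" where
  "degree V E v = card (edges_between E {v} V)"

text \<open>Graph distance in the induced subgraph on A (infinite if no path).\<close>
definition gdist :: "('a \<Rightarrow> 'a \<Rightarrow> bool) \<Rightarrow> 'a set \<Rightarrow> 'a \<Rightarrow> 'a \<Rightarrow> enat" where
  "gdist E A x y = (INF n \<in> {n. \<exists>xs. length xs = Suc n \<and> hd xs = x \<and> last xs = y
        \<and> set xs \<subseteq> A \<and> (\<forall>i<n. E (xs ! i) (xs ! Suc i))}. enat n)"

definition gdist_set :: "('a \<Rightarrow> 'a \<Rightarrow> bool) \<Rightarrow> 'a set \<Rightarrow> 'a \<Rightarrow> 'a set \<Rightarrow> enat" where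
  "gdist_set E V x A = (INF a \<in> A. gdist E V x a)"

definition cdist :: "('a \<Rightarrow> 'a \<Rightarrow> bool) \<Rightarrow> 'a set \<Rightarrow> 'a set \<Rightarrow> 'a \<Rightarrow> 'a \<Rightarrow> enat" where
  "cdist E V V1 x y =
     (if x \<in> V1 \<and> y \<in> V1 then
        min (gdist E V1 x y) (gdist_set E V x (V - V1) + gdist_set E V y (V - V1))
      else if y \<notin> V1 then gdist_set E V x (V - V1)
      else gdist_set E V y (V - V1))"

definition cdist_set :: "('a \<Rightarrow> 'a \<Rightarrow> bool) \<Rightarrow> 'a set \<Rightarrow> 'a set \<Rightarrow> 'a \<Rightarrow> 'a set \<Rightarrow> enat" where
  "cdist_set E V V1 x A = (INF a \<in> A. cdist E V V1 x a)"

definition bdry :: "('a \<Rightarrow> 'a \<Rightarrow> bool) \<Rightarrow> 'a set \<Rightarrow> 'a set \<Rightarrow> nat \<Rightarrow> 'a set" where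
  "bdry E V V1 j = {x \<in> V1. card (edges_between E {x} (V - V1)) \<ge> j}"

definition intr :: "('a \<Rightarrow> 'a \<Rightarrow> bool) \<Rightarrow> 'a set \<Rightarrow> 'a set \<Rightarrow> nat \<Rightarrow> 'a set" where
  "intr E V V1 j = {x \<in> V1. card (edges_between E {x} (V - V1)) < j}"

definition Phi :: "('a \<Rightarrow> 'a \<Rightarrow> bool) \<Rightarrow> 'a set \<Rightarrow> 'a set \<Rightarrow> nat" where
  "Phi E V V1 = (\<Sum>x\<in>V1. min (max 1 (card (edges_between E {x} (intr E V V1 2))))
                              (card (edges_between E {x} (V - V1))))"

end

theory Submission
  imports Defs
begin

(* Write Sbar = V - S (a subset of V1, since V - V1 is contained in S),
   V2 = V - V1, S1 = S \<inter> V1 and c = |[S,Sbar]| < k.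
   (a) Since c < k, some vertex t0 of Sbar has no neighbour in S: otherwise every
       t in Sbar sends at least max 1 (k + 1 - |Sbar|) edges to S, and summing over Sbar
       gives c \<ge> k.  All k or more neighbours of t0 lie in Sbar, hence k < |Sbar|.
   (b) t0 is at distance \<ge> 2 from V2; using the contracted diameter bound, every
       s in S1 has a neighbour in Sbar (through a common neighbour with t0 inside G1),
       and some vertex of Sbar is adjacent to V2 (on a shortest path from t0 to V2).
   (c) Counting the cut edges from the S-side, c \<ge> |S1| + 1; comparing with the
       degree of a vertex s in S1 shows that s has at least two neighbours in V2.
   (d) The distance claims and the bound on Phi then follow by direct computation. *)

section \<open>Distances\<close>

lemma gdist_walk:
  assumes "gdist E A x y \<le> enat n"
  obtains m xs where "m \<le> n" "length xs = Suc m" "hd xs = x" "last xs = y"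
    "set xs \<subseteq> A" "\<forall>i<m. E (xs ! i) (xs ! Suc i)"
proof -
  let ?N = "{n. \<exists>xs. length xs = Suc n \<and> hd xs = x \<and> last xs = y
        \<and> set xs \<subseteq> A \<and> (\<forall>i<n. E (xs ! i) (xs ! Suc i))}"
  have "?N \<noteq> {}"
  proof
    assume empty: "?N = {}"
    have "gdist E A x y = \<infinity>" unfolding gdist_def by (subst empty) (simp add: top_enat_def)
    with assms show False by simp
  qed
  then have "\<exists>m. m \<in> ?N" by blast
  define m where "m = (LEAST m. m \<in> ?N)"
  have mN: "m \<in> ?N" unfolding m_def using \<open>\<exists>m. m \<in> ?N\<close> by (rule LeastI_ex)
  have "gdist E A x y \<le> enat m" unfolding gdist_def using mN by (rule INF_lower)
  moreover have "enat m \<le> gdist E A x y" unfolding gdist_def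
    by (rule INF_greatest) (simp add: m_def Least_le)
  ultimately have "gdist E A x y = enat m" by (rule antisym)
  with assms mN that show ?thesis by auto
qed

lemma gdist_le_1:
  assumes "gdist E A x y \<le> 1"
  shows "x = y \<or> E x y"
proof -
  have "gdist E A x y \<le> enat 1" using assms by (simp add: one_enat_def)
  then obtain m xs where w: "m \<le> 1" "length xs = Suc m" "hd xs = x" "last xs = y"
    "set xs \<subseteq> A" "\<forall>i<m. E (xs ! i) (xs ! Suc i)"
    by (rule gdist_walk)
  then consider "xs = [x]" | "xs = [x, y]"
    by (cases xs; cases "tl xs") (auto simp: le_Suc_eq)
  then show ?thesis using w by cases auto
qed

lemma gdist_le_2:
  assumes "gdist E A x y \<le> 2"
  shows "x = y \<or> E x y \<or> (\<exists>u\<in>A. E x u \<and> E u y)"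
proof -
  have "gdist E A x y \<le> enat 2" using assms by (simp add: numeral_eq_enat)
  then obtain m xs where w: "m \<le> 2" "length xs = Suc m" "hd xs = x" "last xs = y"
    "set xs \<subseteq> A" "\<forall>i<m. E (xs ! i) (xs ! Suc i)"
    by (rule gdist_walk)
  then consider "xs = [x]" | "xs = [x, y]" "m = 1" | u where "xs = [x, u, y]" "m = 2"
    by (cases xs; cases "tl xs"; cases "tl (tl xs)") (auto simp: le_Suc_eq numeral_2_eq_2)
  then show ?thesis
  proof cases
    case (3 u)
    have "E x u" "E u y" using w(6)[rule_format, of 0] w(6)[rule_format, of 1] 3 by auto
    with 3 w(5) show ?thesis by auto
  qed (use w in auto)
qed

lemma gdist_edge:
  assumes "x \<in> A" "y \<in> A" "E x y"
  shows "gdist E A x y \<le> 1"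
proof -
  have "gdist E A x y \<le> enat 1" unfolding gdist_def
    by (rule INF_lower) (rule CollectI, rule exI[of _ "[x, y]"], use assms in auto)
  then show ?thesis by (simp add: one_enat_def)
qed

lemma gdist_ge_1:
  assumes "x \<noteq> y"
  shows "1 \<le> gdist E A x y"
proof (rule ccontr)
  assume "\<not> 1 \<le> gdist E A x y"
  then have "gdist E A x y \<le> enat 0" by (cases "gdist E A x y") (auto simp: one_enat_def)
  then obtain m xs where "m \<le> 0" "length xs = Suc m" "hd xs = x" "last xs = y"
    by (rule gdist_walk)
  with assms show False by (cases xs) auto
qed

lemma gdist_ge_2:
  assumes "x \<noteq> y" "\<not> E x y"
  shows "2 \<le> gdist E A x y"
proof (rule ccontr)
  assume "\<not> 2 \<le> gdist E A x y"
  then have "gdist E A x y \<le> 1"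
    by (cases "gdist E A x y") (auto simp: one_enat_def numeral_eq_enat)
  then have "x = y \<or> E x y" by (rule gdist_le_1)
  with assms show False by blast
qed

lemma enat_not_le_2: "\<not> (g::enat) \<le> 2 \<Longrightarrow> 3 \<le> g"
  by (cases g) (auto simp: numeral_eq_enat)

lemma gdist_set_le_2:
  assumes "gdist_set E V x A \<le> 2"
  shows "\<exists>a\<in>A. gdist E V x a \<le> 2"
proof (rule ccontr)
  assume "\<not> ?thesis"
  then have "\<And>a. a \<in> A \<Longrightarrow> 3 \<le> gdist E V x a" by (auto intro: enat_not_le_2)
  then have "3 \<le> gdist_set E V x A" unfolding gdist_set_def by (rule INF_greatest)
  have "(3::enat) \<le> 2" using \<open>3 \<le> gdist_set E V x A\<close> assms by (rule order.trans)
  then show False by simp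
qed

lemma gdist_set_ge_1:
  assumes "x \<notin> A"
  shows "1 \<le> gdist_set E V x A"
  unfolding gdist_set_def using assms by (auto intro!: INF_greatest gdist_ge_1)

lemma gdist_set_ge_2:
  assumes "x \<notin> A" "\<forall>a\<in>A. \<not> E x a"
  shows "2 \<le> gdist_set E V x A"
  unfolding gdist_set_def using assms by (auto intro!: INF_greatest gdist_ge_2)

lemma cdist_set_le: "a \<in> A \<Longrightarrow> cdist_set E V V1 x A \<le> cdist E V V1 x a"
  unfolding cdist_set_def by (rule INF_lower)

lemma cdist_set_ge: "(\<And>a. a \<in> A \<Longrightarrow> c \<le> cdist E V V1 x a) \<Longrightarrow> c \<le> cdist_set E V V1 x A"
  unfolding cdist_set_def by (rule INF_greatest)

text \<open>If y \<in> V1 is at distance \<ge> 2 from V - V1, then a contracted distance \<le> 2 from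
  another vertex of V1 cannot be realised through V - V1 (that would cost \<ge> 3), so it
  is a distance inside G1.\<close>
lemma cdist_le_2_inside:
  assumes "x \<in> V1" "y \<in> V1" "cdist E V V1 x y \<le> 2" "2 \<le> gdist_set E V y (V - V1)"
  shows "gdist E V1 x y \<le> 2"
proof -
  have "(1::enat) + 2 \<le> gdist_set E V x (V - V1) + gdist_set E V y (V - V1)"
    using assms(1,4) gdist_set_ge_1[of x "V - V1"] by (intro add_mono) auto
  then have "\<not> gdist_set E V x (V - V1) + gdist_set E V y (V - V1) \<le> 2"
    using order.trans[of "3::enat" _ 2] by auto
  with assms(1-3) show ?thesis unfolding cdist_def by (auto simp: min_def split: if_splits)
qed

section \<open>Counting edges\<close>

lemma card_edges_from_vertex: "card (edges_between E {x} B) = card {b\<in>B. E x b}"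
proof -
  have "edges_between E {x} B = (\<lambda>b. {x, b}) ` {b\<in>B. E x b}"
    unfolding edges_between_def by auto
  then show ?thesis by (simp add: card_image inj_on_def doubleton_eq_iff)
qed

lemma finite_nbrs: "simple_graph V E \<Longrightarrow> finite {b\<in>B. E x b}"
  unfolding simple_graph_def by (metis (no_types, lifting) mem_Collect_eq rev_finite_subset subsetI)

lemma edges_between_commute: "simple_graph V E \<Longrightarrow> edges_between E A B = edges_between E B A"
  unfolding edges_between_def simple_graph_def by (auto simp: insert_commute)

lemma card_edges_between_sum:
  assumes G: "simple_graph V E" and X: "finite X" "X \<inter> B = {}"
  shows "card (edges_between E X B) = (\<Sum>x\<in>X. card {b\<in>B. E x b})"
proof -
  have "edges_between E X B = (\<Union>x\<in>X. edges_between E {x} B)"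
    unfolding edges_between_def by auto
  also have "card \<dots> = (\<Sum>x\<in>X. card (edges_between E {x} B))"
  proof (rule card_UN_disjoint[OF X(1)])
    show "\<forall>x\<in>X. finite (edges_between E {x} B)"
      using finite_nbrs[OF G] unfolding edges_between_def
      by (auto intro: finite_surj[of "{b\<in>B. E _ b}" _ "\<lambda>b. {_, b}"])
    show "\<forall>i\<in>X. \<forall>j\<in>X. i \<noteq> j \<longrightarrow> edges_between E {i} B \<inter> edges_between E {j} B = {}"
      using X(2) unfolding edges_between_def by (auto simp: doubleton_eq_iff)
  qed
  finally show ?thesis by (simp add: card_edges_from_vertex)
qed

lemma card_nbrs_within_less:
  assumes "simple_graph V E" "finite A" "x \<in> A"
  shows "card {b\<in>A. E x b} < card A"
  using assms unfolding simple_graph_def by (intro psubset_card_mono) auto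

lemma card_nbrs_Un_le:
  assumes "C = A \<union> B"
  shows "card {b\<in>C. E x b} \<le> card {b\<in>A. E x b} + card {b\<in>B. E x b}"
proof -
  have "{b\<in>C. E x b} = {b\<in>A. E x b} \<union> {b\<in>B. E x b}" using assms by auto
  then show ?thesis by (metis card_Un_le)
qed

lemma le_mult_max_one:
  assumes "1 \<le> (n::nat)"
  shows "k \<le> n * max 1 (k + 1 - n)"
proof (cases "k < n")
  case True
  have "n * 1 \<le> n * max 1 (k + 1 - n)" by (rule mult_le_mono2) simp
  then show ?thesis using True by simp
next
  case False
  then obtain a b where "n = a + 1" "k = a + 1 + b"
    using assms by (metis add.commute le_add_diff_inverse not_less)
  then show ?thesis by (simp add: algebra_simps)
qed

lemma vertex_beyond_small_cut:
  assumes G: "simple_graph V E" and T: "T \<subseteq> V" "T \<noteq> {}"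
    and deg: "\<And>t. t \<in> T \<Longrightarrow> k \<le> card {b\<in>V. E t b}"
    and small: "card (edges_between E (V - T) T) < k"
  shows "\<exists>t\<in>T. \<forall>s\<in>V - T. \<not> E t s"
proof (rule ccontr)
  assume "\<not> ?thesis"
  then have out: "\<And>t. t \<in> T \<Longrightarrow> {b\<in>V - T. E t b} \<noteq> {}" by auto
  have finT: "finite T" using G T(1) unfolding simple_graph_def by (auto intro: finite_subset)
  define m where "m = max 1 (k + 1 - card T)"
  have m_le: "m \<le> card {b\<in>V - T. E t b}" if t: "t \<in> T" for t
  proof -
    have "k \<le> card {b\<in>V. E t b}" using deg t .
    also have "\<dots> \<le> card {b\<in>V - T. E t b} + card {b\<in>T. E t b}"
      using T(1) by (intro card_nbrs_Un_le) auto
    finally have "k < card {b\<in>V - T. E t b} + card T"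
      using card_nbrs_within_less[OF G finT t] by linarith
    moreover have "0 < card {b\<in>V - T. E t b}"
      using out[OF t] finite_nbrs[OF G, of "V - T" t] card_gt_0_iff by blast
    ultimately show ?thesis unfolding m_def by linarith
  qed
  have "k \<le> card T * m"
    unfolding m_def using T(2) finT by (intro le_mult_max_one) (simp add: Suc_le_eq card_gt_0_iff)
  also have "\<dots> = (\<Sum>t\<in>T. m)" by simp
  also have "\<dots> \<le> (\<Sum>t\<in>T. card {b\<in>V - T. E t b})" by (rule sum_mono) (rule m_le)
  also have "\<dots> = card (edges_between E (V - T) T)"
    using card_edges_between_sum[OF G finT, of "V - T"] edges_between_commute[OF G] by auto
  finally show False using small by simp
qed

text \<open>The hypotheses of the theorem (the nonemptiness of V1 and S is implied by the others).\<close>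
locale small_cut =
  fixes V :: "'a set" and E :: "'a \<Rightarrow> 'a \<Rightarrow> bool" and V1 S :: "'a set" and k :: nat
  assumes graph: "simple_graph V E"
    and V1: "V1 \<subseteq> V" "V - V1 \<noteq> {}"
    and diam: "\<forall>x\<in>V. \<forall>y\<in>V. cdist E V V1 x y \<le> 2"
    and S: "S \<subset> V" "V - V1 \<subseteq> S"
    and k: "k = Min (degree V E ` V1)"
    and cut: "card (edges_between E S (V - S)) < k"
begin

abbreviation V2 :: "'a set" where "V2 \<equiv> V - V1"
abbreviation Sbar :: "'a set" where "Sbar \<equiv> V - S"
abbreviation S1 :: "'a set" where "S1 \<equiv> S \<inter> V1"
abbreviation cutsize :: nat where "cutsize \<equiv> card (edges_between E S Sbar)"

abbreviation nbrs_Sbar :: "'a \<Rightarrow> nat" where "nbrs_Sbar x \<equiv> card {b\<in>Sbar. E x b}"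

lemma finite_V: "finite V"
  using graph unfolding simple_graph_def by blast

lemma E_sym: "E x y \<Longrightarrow> E y x"
  and E_in_V: "E x y \<Longrightarrow> x \<in> V \<and> y \<in> V"
  using graph unfolding simple_graph_def by blast+

lemma finite_parts: "finite S" "finite Sbar" "finite S1" "finite V1" "finite V2"
  using S V1 finite_V by (auto intro: finite_subset)

lemma Sbar_sub_V1: "Sbar \<subseteq> V1" and Sbar_nonempty: "Sbar \<noteq> {}"
  using S by auto

lemma degree_ge_k: "x \<in> V1 \<Longrightarrow> k \<le> card {b\<in>V. E x b}"
  using finite_parts(4) unfolding k degree_def card_edges_from_vertex[symmetric]
  by (intro Min_le) auto

lemma cutsize_split: "cutsize = (\<Sum>s\<in>S1. nbrs_Sbar s) + (\<Sum>s\<in>V2. nbrs_Sbar s)"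
proof -
  have "cutsize = (\<Sum>s\<in>S. nbrs_Sbar s)"
    using card_edges_between_sum[OF graph finite_parts(1), of Sbar] by auto
  also have "\<dots> = (\<Sum>s\<in>S1 \<union> V2. nbrs_Sbar s)"
    using S by (intro arg_cong[where f = "sum (\<lambda>s. nbrs_Sbar s)"]) auto
  also have "\<dots> = (\<Sum>s\<in>S1. nbrs_Sbar s) + (\<Sum>s\<in>V2. nbrs_Sbar s)"
    using finite_parts by (intro sum.union_disjoint) auto
  finally show ?thesis .
qed

lemma far_vertex: "\<exists>t0\<in>Sbar. \<forall>s\<in>S. \<not> E t0 s"
proof -
  have "V - Sbar = S" using S by auto
  then show ?thesis
    using vertex_beyond_small_cut[of V E Sbar k] graph Sbar_nonempty Sbar_sub_V1 degree_ge_k cut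
      edges_between_commute[OF graph]
    by auto
qed

text \<open>Claim 3, last part: the \<ge> k neighbours of t0 all lie in Sbar - {t0}.\<close>
lemma k_less_card_Sbar: "k < card Sbar"
proof -
  obtain t0 where t0: "t0 \<in> Sbar" "\<forall>s\<in>S. \<not> E t0 s" using far_vertex by blast
  have "k \<le> card {b\<in>V. E t0 b}" using degree_ge_k t0(1) Sbar_sub_V1 by blast
  also have "{b\<in>V. E t0 b} = {b\<in>Sbar. E t0 b}" using t0(2) by auto
  also have "card \<dots> < card Sbar" using card_nbrs_within_less[OF graph finite_parts(2) t0(1)] .
  finally show ?thesis .
qed

lemma far_vertex_dist_V2:
  assumes "t0 \<in> Sbar" "\<forall>s\<in>S. \<not> E t0 s"
  shows "2 \<le> gdist_set E V t0 V2"
  using assms S(2) by (intro gdist_set_ge_2) auto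

lemma S1_nbr_in_Sbar:
  assumes s: "s \<in> S1"
  shows "\<exists>t\<in>Sbar. E s t"
proof -
  obtain t0 where t0: "t0 \<in> Sbar" "\<forall>s\<in>S. \<not> E t0 s" using far_vertex by blast
  have "cdist E V V1 s t0 \<le> 2" using diam s t0 V1 by auto
  then have "gdist E V1 s t0 \<le> 2"
    using s t0 Sbar_sub_V1 far_vertex_dist_V2 by (intro cdist_le_2_inside) auto
  then have "s = t0 \<or> E s t0 \<or> (\<exists>u\<in>V1. E s u \<and> E u t0)" by (rule gdist_le_2)
  then obtain u where "E s u" "E u t0" using s t0 E_sym by auto
  moreover have "u \<in> Sbar" using t0 E_sym E_in_V \<open>E u t0\<close> by blast
  ultimately show ?thesis by blast
qed

lemma Sbar_adjacent_V2: "\<exists>u\<in>Sbar. \<exists>v\<in>V2. E u v"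
proof -
  obtain t0 where t0: "t0 \<in> Sbar" "\<forall>s\<in>S. \<not> E t0 s" using far_vertex by blast
  obtain v0 where v0: "v0 \<in> V2" using V1(2) by blast
  have "cdist E V V1 t0 v0 = gdist_set E V t0 V2" using v0 t0(1) S unfolding cdist_def by auto
  moreover have "cdist E V V1 t0 v0 \<le> 2" using diam t0(1) v0 by auto
  ultimately obtain v where v: "v \<in> V2" "gdist E V t0 v \<le> 2" using gdist_set_le_2 by metis
  have "t0 \<noteq> v" "\<not> E t0 v" using v(1) t0 S by auto
  with gdist_le_2[OF v(2)] obtain u where "E t0 u" "E u v" by blast
  moreover have "u \<in> Sbar" using t0 E_in_V \<open>E t0 u\<close> by blast
  ultimately show ?thesis using v(1) by blast
qed

lemma nbrs_Sbar_pos: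
  assumes "s \<in> S1"
  shows "1 \<le> nbrs_Sbar s"
proof -
  have "{b\<in>Sbar. E s b} \<noteq> {}" using S1_nbr_in_Sbar[OF assms] by blast
  then have "0 < nbrs_Sbar s" using finite_nbrs[OF graph, of Sbar s] card_gt_0_iff by blast
  then show ?thesis by simp
qed

lemma sum_nbrs_Sbar_V2_pos: "1 \<le> (\<Sum>s\<in>V2. nbrs_Sbar s)"
proof -
  obtain u v where uv: "u \<in> Sbar" "v \<in> V2" "E u v" using Sbar_adjacent_V2 by blast
  then have "{b\<in>Sbar. E v b} \<noteq> {}" using E_sym by blast
  then have "0 < nbrs_Sbar v" using finite_nbrs[OF graph, of Sbar v] card_gt_0_iff by blast
  also have "nbrs_Sbar v \<le> (\<Sum>s\<in>V2. nbrs_Sbar s)"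
    using uv(2) finite_parts(5) by (intro member_le_sum) auto
  finally show ?thesis by simp
qed

lemma cutsize_ge:
  assumes "s \<in> S1"
  shows "nbrs_Sbar s + card S1 \<le> cutsize"
proof -
  have "card (S1 - {s}) = (\<Sum>x\<in>S1 - {s}. 1)" by simp
  also have "\<dots> \<le> (\<Sum>x\<in>S1 - {s}. nbrs_Sbar x)" by (rule sum_mono) (rule nbrs_Sbar_pos, blast)
  finally have "nbrs_Sbar s + card S1 \<le> (\<Sum>x\<in>S1. nbrs_Sbar x) + 1"
    using assms finite_parts(3) by (simp add: sum.remove card_Diff_singleton)
  then show ?thesis using cutsize_split sum_nbrs_Sbar_V2_pos by linarith
qed

lemma card_S1_less_cutsize: "card S1 < cutsize"
proof -
  have "card S1 = (\<Sum>x\<in>S1. 1)" by simp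
  also have "\<dots> \<le> (\<Sum>x\<in>S1. nbrs_Sbar x)" by (rule sum_mono) (rule nbrs_Sbar_pos)
  finally show ?thesis using cutsize_split sum_nbrs_Sbar_V2_pos by linarith
qed

text \<open>Step (c): every vertex of S1 has at least two neighbours in V2, because its degree
  \<ge> k exceeds the neighbours it can have in Sbar and S1 by at least two.\<close>
lemma S1_two_nbrs_V2:
  assumes s: "s \<in> S1"
  shows "2 \<le> card {b\<in>V2. E s b}"
proof -
  have "card {b\<in>V. E s b} \<le> nbrs_Sbar s + card {b\<in>S1 \<union> V2. E s b}"
    using S by (intro card_nbrs_Un_le) auto
  moreover have "card {b\<in>S1 \<union> V2. E s b} \<le> card {b\<in>S1. E s b} + card {b\<in>V2. E s b}"
    by (rule card_nbrs_Un_le) (rule refl)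
  moreover have "card {b\<in>S1. E s b} < card S1"
    using card_nbrs_within_less[OF graph finite_parts(3) s] .
  moreover have "k \<le> card {b\<in>V. E s b}" using degree_ge_k s by auto
  ultimately show ?thesis using cutsize_ge[OF s] cut by linarith
qed

lemma S1_sub_bdry: "S1 \<subseteq> bdry E V V1 2"
  using S1_two_nbrs_V2 unfolding bdry_def card_edges_from_vertex by auto

lemma intr_sub_Sbar: "intr E V V1 2 \<subseteq> Sbar"
  using S1_two_nbrs_V2 V1(1) unfolding intr_def card_edges_from_vertex by force

lemma far_vertex_cdist:
  assumes t0: "t0 \<in> Sbar" "\<forall>s\<in>S. \<not> E t0 s"
  shows "cdist_set E V V1 t0 S = 2"
proof (rule antisym)
  obtain s0 where s0: "s0 \<in> S" using S V1(2) by blast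
  have "cdist_set E V V1 t0 S \<le> cdist E V V1 t0 s0" using s0 by (rule cdist_set_le)
  also have "\<dots> \<le> 2" using diam t0(1) s0 S by auto
  finally show "cdist_set E V V1 t0 S \<le> 2" .
  have dV2: "2 \<le> gdist_set E V t0 V2" using far_vertex_dist_V2[OF t0] .
  show "2 \<le> cdist_set E V V1 t0 S"
  proof (rule cdist_set_ge)
    fix s assume s: "s \<in> S"
    show "2 \<le> cdist E V V1 t0 s"
    proof (cases "s \<in> V1")
      case True
      have "2 \<le> gdist E V1 t0 s" using s t0 by (intro gdist_ge_2) auto
      moreover have "(2::enat) + 0 \<le> gdist_set E V t0 V2 + gdist_set E V s V2"
        using dV2 by (intro add_mono) auto
      ultimately show ?thesis using True t0 Sbar_sub_V1 unfolding cdist_def by auto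
    next
      case False
      then show ?thesis using dV2 t0 Sbar_sub_V1 unfolding cdist_def by auto
    qed
  qed
qed

lemma S_cdist_Sbar:
  assumes s: "s \<in> S"
  shows "cdist_set E V V1 s Sbar = 1"
proof (rule antisym)
  show "cdist_set E V V1 s Sbar \<le> 1"
  proof (cases "s \<in> V1")
    case True
    then obtain t where t: "t \<in> Sbar" "E s t" using S1_nbr_in_Sbar s by blast
    have "cdist_set E V V1 s Sbar \<le> cdist E V V1 s t" using t(1) by (rule cdist_set_le)
    also have "\<dots> \<le> gdist E V1 s t" using True t Sbar_sub_V1 unfolding cdist_def by auto
    also have "\<dots> \<le> 1" using True t Sbar_sub_V1 by (intro gdist_edge) auto
    finally show ?thesis .
  next
    case False
    obtain u v where uv: "u \<in> Sbar" "v \<in> V2" "E u v" using Sbar_adjacent_V2 by blast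
    have "cdist_set E V V1 s Sbar \<le> cdist E V V1 s u" using uv(1) by (rule cdist_set_le)
    also have "\<dots> = gdist_set E V u V2" using False uv(1) Sbar_sub_V1 unfolding cdist_def by auto
    also have "\<dots> \<le> gdist E V u v" unfolding gdist_set_def using uv(2) by (rule INF_lower)
    also have "\<dots> \<le> 1" using uv(3) E_in_V by (intro gdist_edge) auto
    finally show ?thesis .
  qed
  show "1 \<le> cdist_set E V V1 s Sbar"
  proof (rule cdist_set_ge)
    fix t assume t: "t \<in> Sbar"
    have tV1: "t \<in> V1" and "s \<noteq> t" using s t Sbar_sub_V1 by auto
    then have "1 \<le> gdist E V1 s t" by (intro gdist_ge_1)
    moreover have "(0::enat) + 1 \<le> gdist_set E V s V2 + gdist_set E V t V2"
      using tV1 by (intro add_mono gdist_set_ge_1) auto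
    ultimately show "1 \<le> cdist E V V1 s t"
      using tV1 gdist_set_ge_1[of t V2] unfolding cdist_def by auto
  qed
qed

text \<open>Claim 5: on S1 each summand of Phi is at most the number of neighbours in Sbar
  (which contains all of intr V1 2); on Sbar it is at most the number of neighbours in
  V2, and these add up to the V2 part of the cut.\<close>
lemma Phi_le_cutsize: "Phi E V V1 \<le> cutsize"
proof -
  define g where "g = (\<lambda>x. min (max 1 (card (edges_between E {x} (intr E V V1 2))))
                              (card (edges_between E {x} V2)))"
  have "Phi E V V1 = (\<Sum>x\<in>S1 \<union> Sbar. g x)"
    unfolding Phi_def g_def using S V1(1) by (intro sum.cong) auto
  also have "\<dots> = (\<Sum>x\<in>S1. g x) + (\<Sum>x\<in>Sbar. g x)"
    using finite_parts by (intro sum.union_disjoint) auto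
  also have "\<dots> \<le> (\<Sum>x\<in>S1. nbrs_Sbar x) + (\<Sum>x\<in>Sbar. card {b\<in>V2. E x b})"
  proof (intro add_mono sum_mono)
    fix x assume x: "x \<in> S1"
    have "card {b\<in>intr E V V1 2. E x b} \<le> nbrs_Sbar x"
      using intr_sub_Sbar finite_nbrs[OF graph, of Sbar x] by (intro card_mono) auto
    then show "g x \<le> nbrs_Sbar x"
      using nbrs_Sbar_pos[OF x] unfolding g_def card_edges_from_vertex by linarith
  qed (simp add: g_def card_edges_from_vertex)
  also have "(\<Sum>x\<in>Sbar. card {b\<in>V2. E x b}) = card (edges_between E Sbar V2)"
    using S(2) by (intro card_edges_between_sum[OF graph finite_parts(2), symmetric]) auto
  also have "\<dots> = card (edges_between E V2 Sbar)" by (simp add: edges_between_commute[OF graph])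
  also have "\<dots> = (\<Sum>x\<in>V2. nbrs_Sbar x)"
    using S(2) by (intro card_edges_between_sum[OF graph finite_parts(5)]) auto
  finally show ?thesis using cutsize_split by simp
qed

end

theorem theorem1:
  fixes V :: "'a set" and E :: "'a \<Rightarrow> 'a \<Rightarrow> bool" and V1 S :: "'a set" and k :: nat
  assumes G: "simple_graph V E"
    and V1: "V1 \<subseteq> V" "V1 \<noteq> {}" "V - V1 \<noteq> {}"
    and diam: "\<forall>x\<in>V. \<forall>y\<in>V. cdist E V V1 x y \<le> 2"
    and S: "S \<noteq> {}" "S \<subset> V" "V - V1 \<subseteq> S"
    and k: "k = Min (degree V E ` V1)"
    and cut: "k > card (edges_between E S (V - S))"
  shows "(\<exists>s\<in>V - S. cdist_set E V V1 s S = 2)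
    \<and> (\<forall>s\<in>S. cdist_set E V V1 s (V - S) = 1)
    \<and> card (S \<inter> V1) < card (edges_between E S (V - S))
    \<and> card (edges_between E S (V - S)) < k
    \<and> k < card (V - S)
    \<and> S \<inter> V1 \<subseteq> bdry E V V1 2 \<and> intr E V V1 2 \<subseteq> V - S
    \<and> Phi E V V1 \<le> card (edges_between E S (V - S))"
proof -
  interpret small_cut V E V1 S k
    using G V1(1,3) diam S(2,3) k cut by unfold_locales
  have claim1: "\<exists>s\<in>V - S. cdist_set E V V1 s S = 2"
    using far_vertex far_vertex_cdist by blast
  show ?thesis
    using claim1 S_cdist_Sbar card_S1_less_cutsize cut k_less_card_Sbar
      S1_sub_bdry intr_sub_Sbar Phi_le_cutsize by blast
qed

end
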